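(* Let $U$ be a finite-dimensional complex vector space with basis $\mathbb B$, $w:U\to U$ linear, $\xi:\mathbb B\to\mathbb B$ a bijection and $\le$ a preorder on $\mathbb B$ such that $w$ acts on $(U,\mathbb B,\le)$ by $\xi$ up to lower-order terms. Let $\preceq$ be a linearisation of $\le$ (a total order on $\mathbb B$ with $x\prec y$ whenever $x<y$), and let $[w]_{(\mathbb B,\preceq)}$ be the matrix of $w$ in the ordered basis $(\mathbb B,\preceq)$. Then $[w]_{(\mathbb B,\preceq)}$ has a unique QR decomposition $QR$ (with $Q$ orthogonal and $R$ upper triangular with positive diagonal entries), and $Q$ is a generalised permutation matrix for $\xi$.
   Context: $w$ acts on $(U,\mathbb B,\le)$ by $\xi$ up to lower-order terms if for every $x\in\mathbb B$ there are integers $a_y$ with $w(x)=\pm\xi(x)+\sum_{y<x}a_y\xi(y)$, the sign depending only on the equivalence class of $x$ under the equivalence relation induced by $\le$. A generalised permutation matrix for $\xi$ is a matrix whose only nonzero entries are $\pm1$ in the positions $(\xi(x),x)$, $x\in\mathbb B$. *)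

theory Defs
  imports Main "Jordan_Normal_Form.Matrix"
begin

definition strict_of :: "('u \<Rightarrow> 'u \<Rightarrow> bool) \<Rightarrow> 'u \<Rightarrow> 'u \<Rightarrow> bool" where
  "strict_of leq x y \<longleftrightarrow> leq x y \<and> \<not> leq y x"

definition equiv_of :: "('u \<Rightarrow> 'u \<Rightarrow> bool) \<Rightarrow> 'u \<Rightarrow> 'u \<Rightarrow> bool" where
  "equiv_of leq x y \<longleftrightarrow> leq x y \<and> leq y x"

definition preorder_on :: "'u set \<Rightarrow> ('u \<Rightarrow> 'u \<Rightarrow> bool) \<Rightarrow> bool" where
  "preorder_on B leq \<longleftrightarrow> (\<forall>x\<in>B. leq x x) \<and>
     (\<forall>x\<in>B. \<forall>y\<in>B. \<forall>z\<in>B. leq x y \<longrightarrow> leq y z \<longrightarrow> leq x z)"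

definition total_order_on :: "'u set \<Rightarrow> ('u \<Rightarrow> 'u \<Rightarrow> bool) \<Rightarrow> bool" where
  "total_order_on B lin \<longleftrightarrow> preorder_on B lin \<and>
     (\<forall>x\<in>B. \<forall>y\<in>B. lin x y \<longrightarrow> lin y x \<longrightarrow> x = y) \<and>
     (\<forall>x\<in>B. \<forall>y\<in>B. lin x y \<or> lin y x)"

definition linearisation_of :: "'u set \<Rightarrow> ('u \<Rightarrow> 'u \<Rightarrow> bool) \<Rightarrow> ('u \<Rightarrow> 'u \<Rightarrow> bool) \<Rightarrow> bool" where
  "linearisation_of B leq lin \<longleftrightarrow> total_order_on B lin \<and>
     (\<forall>x\<in>B. \<forall>y\<in>B. strict_of leq x y \<longrightarrow> lin x y \<and> x \<noteq> y)"

definition acts_up_to_lower :: "(complex \<Rightarrow> 'u::ab_group_add \<Rightarrow> 'u) \<Rightarrow> 'u set \<Rightarrow> ('u \<Rightarrow> 'u \<Rightarrow> bool)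
    \<Rightarrow> ('u \<Rightarrow> 'u) \<Rightarrow> ('u \<Rightarrow> 'u) \<Rightarrow> bool" where
  "acts_up_to_lower scale B leq w \<xi> \<longleftrightarrow>
     (\<exists>\<sigma> :: 'u \<Rightarrow> int.
        (\<forall>x\<in>B. \<sigma> x = 1 \<or> \<sigma> x = -1) \<and>
        (\<forall>x\<in>B. \<forall>y\<in>B. equiv_of leq x y \<longrightarrow> \<sigma> x = \<sigma> y) \<and>
        (\<forall>x\<in>B. \<exists>a :: 'u \<Rightarrow> int.
           w x = scale (of_int (\<sigma> x)) (\<xi> x) +
                 (\<Sum>y\<in>{y\<in>B. strict_of leq y x}. scale (of_int (a y)) (\<xi> y))))"

text \<open>The i-th element (counting from 0) of B in the total order lin.\<close>
definition ord_elem :: "'u set \<Rightarrow> ('u \<Rightarrow> 'u \<Rightarrow> bool) \<Rightarrow> nat \<Rightarrow> 'u" where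
  "ord_elem B lin i = (THE x. x \<in> B \<and> card {y\<in>B. lin y x \<and> y \<noteq> x} = i)"

definition matrix_wrt :: "(complex \<Rightarrow> 'u::ab_group_add \<Rightarrow> 'u) \<Rightarrow> 'u set \<Rightarrow> ('u \<Rightarrow> 'u \<Rightarrow> bool)
    \<Rightarrow> ('u \<Rightarrow> 'u) \<Rightarrow> complex mat" where
  "matrix_wrt scale B lin w = mat (card B) (card B)
     (\<lambda>(i,j). module.representation scale B (w (ord_elem B lin j)) (ord_elem B lin i))"

definition is_QR :: "complex mat \<Rightarrow> real mat \<Rightarrow> real mat \<Rightarrow> bool" where
  "is_QR M Q R \<longleftrightarrow> (let n = dim_row M in
     M \<in> carrier_mat n n \<and> Q \<in> carrier_mat n n \<and> R \<in> carrier_mat n n \<and>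
     transpose_mat Q * Q = 1\<^sub>m n \<and> upper_triangular R \<and> (\<forall>i<n. R $$ (i,i) > 0) \<and>
     M = map_mat complex_of_real (Q * R))"

definition gen_perm_for :: "'u set \<Rightarrow> ('u \<Rightarrow> 'u \<Rightarrow> bool) \<Rightarrow> ('u \<Rightarrow> 'u) \<Rightarrow> real mat \<Rightarrow> bool" where
  "gen_perm_for B lin \<xi> Q \<longleftrightarrow> Q \<in> carrier_mat (card B) (card B) \<and>
     (\<forall>i<card B. \<forall>j<card B.
        (ord_elem B lin i = \<xi> (ord_elem B lin j) \<longrightarrow> Q $$ (i,j) = 1 \<or> Q $$ (i,j) = -1) \<and>
        (ord_elem B lin i \<noteq> \<xi> (ord_elem B lin j) \<longrightarrow> Q $$ (i,j) = 0))"

end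

theory Submission
  imports Defs "Jordan_Normal_Form.Determinant"
begin

text \<open>Expanding w on the basis, the matrix of w factors as P T: P is the signed permutation
  matrix of \<xi> with the signs \<sigma>, and T = P^T [w] collects the lower-order coefficients. A
  linearisation lists every strictly lower basis vector earlier, so T is upper triangular with unit
  diagonal, and P T is a QR decomposition. It is the only one: if Q R = P T, then V = P^T Q is
  orthogonal and V R = T. Column by column, V is then the identity: above the diagonal by
  orthogonality to the earlier columns, below it because V R is upper triangular, and on it
  because of unit length and the positive diagonals.\<close>

lemma index_mult_mat_sum:
  assumes "i < dim_row A" "j < dim_col B" "dim_col A = dim_row B"
  shows "(A * B) $$ (i, j) = (\<Sum>k<dim_row B. A $$ (i, k) * B $$ (k, j))"
  using assms by (simp add: scalar_prod_def atLeast0LessThan)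

lemma index_mult_upper_triangular:
  fixes A R :: "'a::semiring_0 mat"
  assumes R: "R \<in> carrier_mat n n" "upper_triangular R"
    and "i < dim_row A" "dim_col A = n" "j < n"
  shows "(A * R) $$ (i, j) = (\<Sum>k\<le>j. A $$ (i, k) * R $$ (k, j))"
proof -
  have "(A * R) $$ (i, j) = (\<Sum>k<n. A $$ (i, k) * R $$ (k, j))"
    using assms by (subst index_mult_mat_sum) auto
  also have "\<dots> = (\<Sum>k\<le>j. A $$ (i, k) * R $$ (k, j))"
    using assms by (intro sum.mono_neutral_right) (auto simp: upper_triangularD)
  finally show ?thesis .
qed

lemma orthonormal_columns:
  fixes V :: "'a::comm_ring_1 mat"
  assumes "V \<in> carrier_mat n n" "transpose_mat V * V = 1\<^sub>m n" "i < n" "j < n"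
  shows "(\<Sum>k<n. V $$ (k, i) * V $$ (k, j)) = (if i = j then 1 else 0)"
proof -
  have "(\<Sum>k<n. V $$ (k, i) * V $$ (k, j)) = (transpose_mat V * V) $$ (i, j)"
    using assms by (subst index_mult_mat_sum) auto
  also have "\<dots> = 1\<^sub>m n $$ (i, j)"
    using assms(2) by simp
  finally show ?thesis
    using assms by simp
qed

lemma orthogonal_eq_one_if_upper_triangular_factors:
  fixes V R :: "'a::linordered_idom mat"
  assumes V: "V \<in> carrier_mat n n" "transpose_mat V * V = 1\<^sub>m n"
    and R: "R \<in> carrier_mat n n" "upper_triangular R" "\<forall>i<n. R $$ (i, i) > 0"
    and VR: "upper_triangular (V * R)" "\<forall>i<n. (V * R) $$ (i, i) > 0"
  shows "V = 1\<^sub>m n"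
proof -
  have "\<forall>i<n. V $$ (i, j) = (if i = j then 1 else 0)" if "j < n" for j
    using that
  proof (induction j rule: less_induct)
    case (less j)
    have earlier: "V $$ (i, k) = (if i = k then 1 else 0)" if "k < j" "i < n" for i k
      using less that by auto
    have on_and_below: "(V * R) $$ (i, j) = V $$ (i, j) * R $$ (j, j)" if "j \<le> i" "i < n" for i
    proof -
      have "(V * R) $$ (i, j) = (\<Sum>k\<le>j. V $$ (i, k) * R $$ (k, j))"
        using V R that less.prems by (intro index_mult_upper_triangular) auto
      also have "\<dots> = (\<Sum>k\<le>j. if k = j then V $$ (i, j) * R $$ (j, j) else 0)"
        using that earlier by (intro sum.cong) auto
      finally show ?thesis
        by simp
    qed
    have above: "V $$ (i, j) = 0" if "i < j" for i
    proof -
      have "(\<Sum>k<n. V $$ (k, i) * V $$ (k, j)) = (\<Sum>k<n. if k = i then V $$ (i, j) else 0)"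
        using that less.prems earlier by (intro sum.cong) auto
      then show ?thesis
        using orthonormal_columns[OF V, of i j] that less.prems by simp
    qed
    have below: "V $$ (i, j) = 0" if "j < i" "i < n" for i
    proof -
      have "V $$ (i, j) * R $$ (j, j) = 0"
        using on_and_below[of i] VR(1) that V R(1) by (auto simp: upper_triangularD)
      then show ?thesis
        using R(3)[rule_format, OF less.prems] by simp
    qed
    have "V $$ (j, j) * V $$ (j, j) = 1"
    proof -
      have "(\<Sum>k<n. V $$ (k, j) * V $$ (k, j)) = (\<Sum>k<n. if k = j then V $$ (j, j) * V $$ (j, j) else 0)"
        using above below by (intro sum.cong) (auto simp: linorder_neq_iff)
      then show ?thesis
        using orthonormal_columns[OF V less.prems less.prems] less.prems by simp
    qed
    moreover have "V $$ (j, j) > 0"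
    proof -
      have "V $$ (j, j) * R $$ (j, j) > 0"
        using VR(2)[rule_format, OF less.prems] unfolding on_and_below[OF order.refl less.prems] .
      then show ?thesis
        using R(3)[rule_format, OF less.prems] by (simp add: zero_less_mult_iff)
    qed
    ultimately have "V $$ (j, j) = 1"
      by (auto simp: square_eq_1_iff)
    then show ?case
      using above below by (auto simp: linorder_neq_iff)
  qed
  then show ?thesis
    using V by (intro eq_matI) auto
qed

lemma QR_factorisation_unique:
  fixes Q R P T :: "'a::linordered_field mat"
  assumes carrier: "Q \<in> carrier_mat n n" "R \<in> carrier_mat n n" "P \<in> carrier_mat n n" "T \<in> carrier_mat n n"
    and orth: "transpose_mat Q * Q = 1\<^sub>m n" "transpose_mat P * P = 1\<^sub>m n"
    and R: "upper_triangular R" "\<forall>i<n. R $$ (i, i) > 0"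
    and T: "upper_triangular T" "\<forall>i<n. T $$ (i, i) > 0"
    and eq: "Q * R = P * T"
  shows "Q = P \<and> R = T"
proof -
  have Pt: "transpose_mat P \<in> carrier_mat n n"
    using carrier by simp
  have P_Pt: "P * transpose_mat P = 1\<^sub>m n"
    using mat_mult_left_right_inverse[OF Pt carrier(3) orth(2)] .
  define V where "V = transpose_mat P * Q"
  have V: "V \<in> carrier_mat n n"
    using carrier by (simp add: V_def)
  have "transpose_mat V * V = transpose_mat Q * (P * transpose_mat P) * Q"
    using carrier by (simp add: V_def transpose_mult assoc_mult_mat[of _ n n _ n _ n])
  then have V_orth: "transpose_mat V * V = 1\<^sub>m n"
    using carrier orth(1) by (simp add: P_Pt)
  have "V * R = transpose_mat P * P * T"
    using carrier eq by (simp add: V_def assoc_mult_mat[of _ n n _ n _ n])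
  then have VR: "V * R = T"
    using carrier orth(2) by simp
  have "V = 1\<^sub>m n"
    using orthogonal_eq_one_if_upper_triangular_factors[OF V V_orth carrier(2) R] VR T by simp
  have "Q = P * transpose_mat P * Q"
    using carrier by (simp add: P_Pt)
  also have "\<dots> = P * V"
    using carrier by (simp add: V_def assoc_mult_mat[of _ n n _ n _ n])
  also have "\<dots> = P"
    using carrier \<open>V = 1\<^sub>m n\<close> by simp
  finally have "Q = P" .
  have "R = transpose_mat Q * (Q * R)"
    using carrier orth(1) by (simp flip: assoc_mult_mat[of _ n n _ n _ n])
  also have "\<dots> = transpose_mat Q * (Q * T)"
    using eq \<open>Q = P\<close> by simp
  also have "\<dots> = T"
    using carrier orth(1) by (simp flip: assoc_mult_mat[of _ n n _ n _ n])
  finally show ?thesis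
    using \<open>Q = P\<close> by simp
qed

lemma is_QR_iff_eq_factors:
  assumes M: "M = map_mat complex_of_real (P * T)"
    and carrier: "P \<in> carrier_mat n n" "T \<in> carrier_mat n n"
    and P: "transpose_mat P * P = 1\<^sub>m n"
    and T: "upper_triangular T" "\<forall>i<n. T $$ (i, i) > 0"
  shows "is_QR M Q R \<longleftrightarrow> Q = P \<and> R = T"
proof
  assume QR: "is_QR M Q R"
  have "dim_row M = n"
    using M carrier by simp
  then have Q: "Q \<in> carrier_mat n n" "transpose_mat Q * Q = 1\<^sub>m n"
    and R: "R \<in> carrier_mat n n" "upper_triangular R" "\<forall>i<n. R $$ (i, i) > 0"
    and M_QR: "M = map_mat complex_of_real (Q * R)"
    using QR unfolding is_QR_def Let_def \<open>dim_row M = n\<close> by blast+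
  have "Q * R = P * T"
    using M M_QR by (intro of_real_hom.mat_hom_inj) simp
  then show "Q = P \<and> R = T"
    using QR_factorisation_unique[OF Q(1) R(1) carrier Q(2) P R(2,3) T] by blast
next
  assume "Q = P \<and> R = T"
  then show "is_QR M Q R"
    using carrier P T unfolding is_QR_def Let_def M by simp
qed

definition signed_perm_mat :: "nat \<Rightarrow> (nat \<Rightarrow> nat) \<Rightarrow> (nat \<Rightarrow> 'a::zero) \<Rightarrow> 'a mat" where
  "signed_perm_mat n \<pi> s = mat n n (\<lambda>(i, k). if i = \<pi> k then s k else 0)"

lemma signed_perm_mat_carrier [simp]: "signed_perm_mat n \<pi> s \<in> carrier_mat n n"
  by (simp add: signed_perm_mat_def)

lemma index_signed_perm_mat_mult:
  fixes s :: "nat \<Rightarrow> 'a::semiring_0"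
  assumes \<pi>: "bij_betw \<pi> {..<n} {..<n}" and T: "T \<in> carrier_mat n m" and "k < n" "j < m"
  shows "(signed_perm_mat n \<pi> s * T) $$ (\<pi> k, j) = s k * T $$ (k, j)"
proof -
  have "\<pi> k < n"
    using bij_betw_apply[OF \<pi>] \<open>k < n\<close> by simp
  then have "(signed_perm_mat n \<pi> s * T) $$ (\<pi> k, j) = (\<Sum>l<n. (if \<pi> k = \<pi> l then s l else 0) * T $$ (l, j))"
    using T \<open>j < m\<close> by (subst index_mult_mat_sum) (auto simp: signed_perm_mat_def intro!: sum.cong)
  also have "\<dots> = (\<Sum>l<n. if l = k then s k * T $$ (k, j) else 0)"
    using bij_betw_imp_inj_on[OF \<pi>] \<open>k < n\<close> by (intro sum.cong) (auto dest: inj_onD)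
  finally show ?thesis
    using \<open>k < n\<close> by simp
qed

lemma signed_perm_mat_orthogonal:
  fixes s :: "nat \<Rightarrow> 'a::comm_ring_1"
  assumes \<pi>: "bij_betw \<pi> {..<n} {..<n}" and s: "\<And>k. k < n \<Longrightarrow> s k * s k = 1"
  shows "transpose_mat (signed_perm_mat n \<pi> s) * signed_perm_mat n \<pi> s = 1\<^sub>m n"
proof (rule eq_matI)
  fix i j assume "i < dim_row (1\<^sub>m n)" "j < dim_col (1\<^sub>m n)"
  then have ij: "i < n" "j < n"
    by simp_all
  then have "\<pi> i < n"
    using bij_betw_apply[OF \<pi>] by simp
  have "(transpose_mat (signed_perm_mat n \<pi> s) * signed_perm_mat n \<pi> s) $$ (i, j)
      = (\<Sum>l<n. (if l = \<pi> i then s i else 0) * (if l = \<pi> j then s j else 0))"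
    using ij by (subst index_mult_mat_sum) (auto simp: signed_perm_mat_def intro!: sum.cong)
  also have "\<dots> = (\<Sum>l<n. if l = \<pi> i then (if i = j then s i * s j else 0) else 0)"
    using bij_betw_imp_inj_on[OF \<pi>] ij by (intro sum.cong) (auto dest: inj_onD)
  also have "\<dots> = 1\<^sub>m n $$ (i, j)"
    using \<open>\<pi> i < n\<close> ij s by simp
  finally show "(transpose_mat (signed_perm_mat n \<pi> s) * signed_perm_mat n \<pi> s) $$ (i, j) = 1\<^sub>m n $$ (i, j)" .
qed (simp_all add: signed_perm_mat_def)

definition rank_in :: "'u set \<Rightarrow> ('u \<Rightarrow> 'u \<Rightarrow> bool) \<Rightarrow> 'u \<Rightarrow> nat" where
  "rank_in B lin x = card {y \<in> B. lin y x \<and> y \<noteq> x}"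

lemma ord_elem_eq_the_inv_into: "ord_elem B lin = the_inv_into B (rank_in B lin)"
  by (simp add: fun_eq_iff ord_elem_def the_inv_into_def rank_in_def)

lemma rank_in_less:
  assumes "finite B" "total_order_on B lin" "x \<in> B" "y \<in> B" "lin x y" "x \<noteq> y"
  shows "rank_in B lin x < rank_in B lin y"
proof -
  have "{z \<in> B. lin z x \<and> z \<noteq> x} \<subset> {z \<in> B. lin z y \<and> z \<noteq> y}"
    using assms unfolding total_order_on_def preorder_on_def by blast
  then show ?thesis
    unfolding rank_in_def using \<open>finite B\<close> by (intro psubset_card_mono) auto
qed

lemma bij_betw_rank_in:
  assumes B: "finite B" and lin: "total_order_on B lin"
  shows "bij_betw (rank_in B lin) B {..<card B}"
proof -
  have inj: "inj_on (rank_in B lin) B"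
  proof (rule inj_onI)
    fix x y assume "x \<in> B" "y \<in> B" "rank_in B lin x = rank_in B lin y"
    then show "x = y"
      using rank_in_less[OF B lin, of x y] rank_in_less[OF B lin, of y x] lin
      unfolding total_order_on_def by (metis less_irrefl)
  qed
  have "rank_in B lin x < card B" if "x \<in> B" for x
    unfolding rank_in_def using B that by (intro psubset_card_mono) auto
  then have "rank_in B lin ` B = {..<card B}"
    using B by (intro card_subset_eq) (auto simp: card_image[OF inj])
  with inj show ?thesis
    by (simp add: bij_betw_def)
qed

lemma bij_betw_ord_elem:
  assumes "finite B" "total_order_on B lin"
  shows "bij_betw (ord_elem B lin) {..<card B} B"
  unfolding ord_elem_eq_the_inv_into using bij_betw_rank_in[OF assms] by (rule bij_betw_the_inv_into)

lemma rank_in_ord_elem: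
  assumes "finite B" "total_order_on B lin" "k < card B"
  shows "rank_in B lin (ord_elem B lin k) = k"
  unfolding ord_elem_eq_the_inv_into using bij_betw_rank_in[OF assms(1,2)] assms(3)
  by (simp add: f_the_inv_into_f_bij_betw)

context finite_dimensional_vector_space
begin

lemma representation_image_combination:
  assumes \<xi>: "inj_on \<xi> Basis" "\<xi> ` Basis \<subseteq> Basis"
    and "S \<subseteq> Basis" "x \<in> Basis" "y \<in> Basis"
  shows "representation Basis (c *s \<xi> x + (\<Sum>z\<in>S. d z *s \<xi> z)) (\<xi> y)
    = (if y = x then c else 0) + (if y \<in> S then d y else 0)"
proof -
  have image_basis: "representation Basis (\<xi> z) (\<xi> y) = (if y = z then 1 else 0)" if "z \<in> Basis" for z
    using representation_basis[OF independent_Basis, of "\<xi> z"] \<xi> that \<open>y \<in> Basis\<close>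
    by (auto simp: inj_on_eq_iff)
  have "finite S"
    using \<open>S \<subseteq> Basis\<close> finite_Basis finite_subset by blast
  have "representation Basis (c *s \<xi> x + (\<Sum>z\<in>S. d z *s \<xi> z)) (\<xi> y)
      = c * representation Basis (\<xi> x) (\<xi> y) + (\<Sum>z\<in>S. d z * representation Basis (\<xi> z) (\<xi> y))"
    by (simp add: representation_add representation_sum representation_scale independent_Basis span_Basis)
  also have "\<dots> = (if y = x then c else 0) + (\<Sum>z\<in>S. if y = z then d y else 0)"
    using image_basis \<open>x \<in> Basis\<close> \<open>S \<subseteq> Basis\<close> by (auto intro!: sum.cong)
  finally show ?thesis
    using \<open>finite S\<close> by simp
qed

end

locale lower_order_action = finite_dimensional_vector_space scale B
  for scale :: "complex \<Rightarrow> 'u::ab_group_add \<Rightarrow> 'u" and B :: "'u set" +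
  fixes leq lin :: "'u \<Rightarrow> 'u \<Rightarrow> bool" and w \<xi> :: "'u \<Rightarrow> 'u"
    and \<sigma> :: "'u \<Rightarrow> int" and a :: "'u \<Rightarrow> 'u \<Rightarrow> int"
  assumes bij_\<xi>: "bij_betw \<xi> B B"
    and linearisation: "linearisation_of B leq lin"
    and sign: "x \<in> B \<Longrightarrow> \<sigma> x = 1 \<or> \<sigma> x = -1"
    and w_on_basis: "x \<in> B \<Longrightarrow>
      w x = scale (of_int (\<sigma> x)) (\<xi> x) + (\<Sum>y\<in>{y \<in> B. strict_of leq y x}. scale (of_int (a x y)) (\<xi> y))"
begin

abbreviation elem :: "nat \<Rightarrow> 'u" where "elem \<equiv> ord_elem B lin"

definition perm :: "nat \<Rightarrow> nat" where
  "perm k = rank_in B lin (\<xi> (elem k))"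

definition perm_factor :: "real mat" where
  "perm_factor = signed_perm_mat (card B) perm (\<lambda>k. of_int (\<sigma> (elem k)))"

text \<open>This is P^T [w]: row k is row perm k of [w], multiplied by the sign of elem k.\<close>
definition unitri_factor :: "real mat" where
  "unitri_factor = mat (card B) (card B) (\<lambda>(k, j).
     if k = j then 1
     else if strict_of leq (elem k) (elem j) then of_int (\<sigma> (elem k) * a (elem j) (elem k)) else 0)"

lemma total_order_lin: "total_order_on B lin"
  using linearisation by (simp add: linearisation_of_def)

lemma bij_betw_elem: "bij_betw elem {..<card B} B"
  using bij_betw_ord_elem[OF finite_Basis total_order_lin] .

lemma elem_in: "k < card B \<Longrightarrow> elem k \<in> B"
  using bij_betw_apply[OF bij_betw_elem] by simp

lemma elem_eq_iff: "k < card B \<Longrightarrow> j < card B \<Longrightarrow> elem k = elem j \<longleftrightarrow> k = j"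
  using bij_betw_imp_inj_on[OF bij_betw_elem] by (auto dest: inj_onD)

lemma strict_elem_imp_less:
  assumes "k < card B" "j < card B" "strict_of leq (elem k) (elem j)"
  shows "k < j"
proof -
  have "lin (elem k) (elem j)" "elem k \<noteq> elem j"
    using linearisation assms elem_in unfolding linearisation_of_def by blast+
  then show ?thesis
    using rank_in_less[OF finite_Basis total_order_lin] rank_in_ord_elem[OF finite_Basis total_order_lin] assms elem_in
    by metis
qed

lemma bij_betw_perm: "bij_betw perm {..<card B} {..<card B}"
proof -
  have "bij_betw (rank_in B lin \<circ> \<xi> \<circ> elem) {..<card B} {..<card B}"
    using bij_betw_elem bij_\<xi> bij_betw_rank_in[OF finite_Basis total_order_lin] by (blast intro: bij_betw_trans)
  moreover have "perm = rank_in B lin \<circ> \<xi> \<circ> elem"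
    by (simp add: fun_eq_iff perm_def)
  ultimately show ?thesis
    by simp
qed

lemma elem_perm: "k < card B \<Longrightarrow> elem (perm k) = \<xi> (elem k)"
  using bij_betw_rank_in[OF finite_Basis total_order_lin] bij_betw_apply[OF bij_\<xi>] elem_in
  by (simp add: perm_def ord_elem_eq_the_inv_into the_inv_into_f_f bij_betw_imp_inj_on)

lemma sign_square:
  assumes "x \<in> B"
  shows "\<sigma> x * \<sigma> x = 1"
  using sign[OF assms] by auto

lemma perm_factor_carrier: "perm_factor \<in> carrier_mat (card B) (card B)"
  by (simp add: perm_factor_def)

lemma perm_factor_orthogonal: "transpose_mat perm_factor * perm_factor = 1\<^sub>m (card B)"
  unfolding perm_factor_def using bij_betw_perm sign_square[OF elem_in]
  by (intro signed_perm_mat_orthogonal) (simp_all flip: of_int_mult)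

lemma gen_perm_for_perm_factor: "gen_perm_for B lin \<xi> perm_factor"
proof -
  have "elem i = \<xi> (elem j) \<longleftrightarrow> i = perm j" if "i < card B" "j < card B" for i j
  proof -
    have "perm j < card B"
      using bij_betw_apply[OF bij_betw_perm] that(2) by simp
    then show ?thesis
      using elem_perm[OF that(2)] elem_eq_iff[OF that(1)] by metis
  qed
  moreover have "real_of_int (\<sigma> (elem j)) = 1 \<or> real_of_int (\<sigma> (elem j)) = -1" if "j < card B" for j
    using sign[OF elem_in[OF that]] by auto
  ultimately show ?thesis
    unfolding gen_perm_for_def perm_factor_def by (auto simp: signed_perm_mat_def)
qed

lemma unitri_factor_carrier: "unitri_factor \<in> carrier_mat (card B) (card B)"
  by (simp add: unitri_factor_def)

lemma unitri_factor_upper_triangular: "upper_triangular unitri_factor"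
proof (rule upper_triangularI)
  fix k j assume "j < k" "k < dim_row unitri_factor"
  then show "unitri_factor $$ (k, j) = 0"
    using strict_elem_imp_less[of k j] by (auto simp: unitri_factor_def)
qed

lemma unitri_factor_diag: "k < card B \<Longrightarrow> unitri_factor $$ (k, k) = 1"
  by (simp add: unitri_factor_def)

lemma representation_w_elem:
  assumes "k < card B" "j < card B"
  shows "representation B (w (elem j)) (\<xi> (elem k))
    = of_int (if k = j then \<sigma> (elem j) else if strict_of leq (elem k) (elem j) then a (elem j) (elem k) else 0)"
proof -
  have "\<not> strict_of leq (elem j) (elem j)"
    by (simp add: strict_of_def)
  moreover have "\<xi> ` B \<subseteq> B" "inj_on \<xi> B"
    using bij_\<xi> by (auto simp: bij_betw_def)
  ultimately show ?thesis
    using representation_image_combination[of \<xi> "{y \<in> B. strict_of leq y (elem j)}"]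
      w_on_basis elem_in assms elem_eq_iff
    by auto
qed

lemma matrix_wrt_eq_factors:
  "matrix_wrt scale B lin w = map_mat complex_of_real (perm_factor * unitri_factor)"
proof (rule eq_matI)
  fix i j assume "i < dim_row (map_mat complex_of_real (perm_factor * unitri_factor))"
    "j < dim_col (map_mat complex_of_real (perm_factor * unitri_factor))"
  then have "i < card B" and j: "j < card B"
    using perm_factor_carrier unitri_factor_carrier by auto
  then obtain k where k: "k < card B" and i: "i = perm k"
    using bij_betw_perm by (auto simp: bij_betw_def)
  have "(perm_factor * unitri_factor) $$ (i, j) = of_int (\<sigma> (elem k)) * unitri_factor $$ (k, j)"
    unfolding i perm_factor_def using bij_betw_perm unitri_factor_carrier k j
    by (rule index_signed_perm_mat_mult)
  also have "\<dots> = of_int (if k = j then \<sigma> (elem j)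
      else if strict_of leq (elem k) (elem j) then a (elem j) (elem k) else 0)"
    using k j sign_square[OF elem_in[OF k]]
    by (simp add: unitri_factor_def mult.assoc flip: of_int_mult)
  finally have "map_mat complex_of_real (perm_factor * unitri_factor) $$ (i, j) = of_int (if k = j then \<sigma> (elem j)
      else if strict_of leq (elem k) (elem j) then a (elem j) (elem k) else 0)"
    using \<open>i < card B\<close> j perm_factor_carrier unitri_factor_carrier by (simp del: index_mult_mat(1))
  also have "\<dots> = representation B (w (elem j)) (\<xi> (elem k))"
    using representation_w_elem[OF k j] by simp
  also have "\<dots> = matrix_wrt scale B lin w $$ (i, j)"
    using elem_perm[OF k] i j \<open>i < card B\<close> by (simp add: matrix_wrt_def)
  finally show "matrix_wrt scale B lin w $$ (i, j) = map_mat complex_of_real (perm_factor * unitri_factor) $$ (i, j)"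
    by (rule sym)
qed (use perm_factor_carrier unitri_factor_carrier in \<open>simp_all add: matrix_wrt_def\<close>)

end

theorem lemmaA2:
  fixes scale :: "complex \<Rightarrow> 'u::ab_group_add \<Rightarrow> 'u"
    and B :: "'u set" and w :: "'u \<Rightarrow> 'u" and \<xi> :: "'u \<Rightarrow> 'u"
    and leq lin :: "'u \<Rightarrow> 'u \<Rightarrow> bool"
  assumes "Vector_Spaces.finite_dimensional_vector_space scale B"
    and "Vector_Spaces.linear scale scale w"
    and "bij_betw \<xi> B B"
    and "preorder_on B leq"
    and "acts_up_to_lower scale B leq w \<xi>"
    and "linearisation_of B leq lin"
  shows "(\<exists>!QR. is_QR (matrix_wrt scale B lin w) (fst QR) (snd QR)) \<and>
         (\<forall>Q R. is_QR (matrix_wrt scale B lin w) Q R \<longrightarrow> gen_perm_for B lin \<xi> Q)"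
proof -
  obtain \<sigma> :: "'u \<Rightarrow> int" where sign: "\<forall>x\<in>B. \<sigma> x = 1 \<or> \<sigma> x = -1"
    and "\<forall>x\<in>B. \<exists>a :: 'u \<Rightarrow> int. w x = scale (of_int (\<sigma> x)) (\<xi> x) +
           (\<Sum>y\<in>{y\<in>B. strict_of leq y x}. scale (of_int (a y)) (\<xi> y))"
    using assms(5) unfolding acts_up_to_lower_def by blast
  then obtain a :: "'u \<Rightarrow> 'u \<Rightarrow> int" where "\<forall>x\<in>B. w x = scale (of_int (\<sigma> x)) (\<xi> x) +
           (\<Sum>y\<in>{y\<in>B. strict_of leq y x}. scale (of_int (a x y)) (\<xi> y))"
    by metis
  then have "lower_order_action scale B leq lin w \<xi> \<sigma> a"
    using assms(1,3,6) sign by (simp add: lower_order_action_def lower_order_action_axioms_def)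
  then interpret lower_order_action scale B leq lin w \<xi> \<sigma> a .
  have QR_iff: "is_QR (matrix_wrt scale B lin w) Q R \<longleftrightarrow> Q = perm_factor \<and> R = unitri_factor" for Q R
    using matrix_wrt_eq_factors perm_factor_carrier unitri_factor_carrier perm_factor_orthogonal
      unitri_factor_upper_triangular unitri_factor_diag
    by (intro is_QR_iff_eq_factors) auto
  show ?thesis
    unfolding QR_iff using gen_perm_for_perm_factor by auto
qed

end
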